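(* Let $\Gamma$ be a group that is the directed union of a directed family $(\Gamma_i)_{i\in I}$ of subgroups. Let $n \in \mathbb{N}$, suppose $\operatorname{H}^n_b(\Gamma_i;\mathbb{R}) \cong 0$ for all $i \in I$, and suppose there is a finite constant $K$ bounding the $n$-th vanishing moduli of all $\Gamma_i$. Then $\operatorname{H}^n_b(\Gamma;\mathbb{R}) \cong 0$.
   Context: $\operatorname{C}^n_b(G;\mathbb{R}) = \ell^\infty(G^{n+1})^G$ (bounded real functions invariant under the diagonal action) with supremum norm $|\cdot|_\infty$ and homogeneous coboundary $\delta^n_b$; $\operatorname{H}^*_b(G;\mathbb{R})$ is its cohomology. If $\operatorname{H}^n_b(G;\mathbb{R})\cong 0$, the $n$-th vanishing modulus of $G$ is the minimal $K \in \mathbb{R}_{\geq 0}\cup\{\infty\}$ such that for every $c \in \ker \delta^n_b$ there is $b \in \operatorname{C}^{n-1}_b(G;\mathbb{R})$ with $\delta^{n-1}_b(b) = c$ and $|b|_\infty \leq K |c|_\infty$. *)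

theory Defs
  imports "HOL-Algebra.Group" "HOL-Library.Extended_Real" Complex_Main
begin

text \<open>An n-cochain is a real function on (n+1)-tuples of group elements, represented as
 lists of length n+1 with entries in carrier G; only its values on such lists matter.\<close>

definition tuples :: "('a, 'b) monoid_scheme \<Rightarrow> nat \<Rightarrow> 'a list set" where
  "tuples G m = {xs. length xs = m \<and> set xs \<subseteq> carrier G}"

definition bcochain :: "('a, 'b) monoid_scheme \<Rightarrow> nat \<Rightarrow> ('a list \<Rightarrow> real) \<Rightarrow> bool" where
  "bcochain G n f \<longleftrightarrow>
     (\<exists>B. \<forall>xs\<in>tuples G (Suc n). \<bar>f xs\<bar> \<le> B) \<and>
     (\<forall>g\<in>carrier G. \<forall>xs\<in>tuples G (Suc n). f (map (\<lambda>x. g \<otimes>\<^bsub>G\<^esub> x) xs) = f xs)"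

definition cobdry :: "('a list \<Rightarrow> real) \<Rightarrow> 'a list \<Rightarrow> real" where
  "cobdry f xs = (\<Sum>j<length xs. (-1) ^ j * f (take j xs @ drop (Suc j) xs))"

definition supnorm :: "('a, 'b) monoid_scheme \<Rightarrow> nat \<Rightarrow> ('a list \<Rightarrow> real) \<Rightarrow> real" where
  "supnorm G n f = (SUP xs\<in>tuples G (Suc n). \<bar>f xs\<bar>)"

definition bcocycle :: "('a, 'b) monoid_scheme \<Rightarrow> nat \<Rightarrow> ('a list \<Rightarrow> real) \<Rightarrow> bool" where
  "bcocycle G n c \<longleftrightarrow> bcochain G n c \<and> (\<forall>xs\<in>tuples G (Suc (Suc n)). cobdry c xs = 0)"

text \<open>b is a bounded (n-1)-cochain with coboundary c (in degree n); for n = 0 the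
 complex has C^{-1} = 0, so c must vanish.\<close>
definition bprimitive :: "('a, 'b) monoid_scheme \<Rightarrow> nat \<Rightarrow> ('a list \<Rightarrow> real) \<Rightarrow> ('a list \<Rightarrow> real) \<Rightarrow> bool" where
  "bprimitive G n b c \<longleftrightarrow>
     (case n of
        0 \<Rightarrow> (\<forall>xs\<in>tuples G 1. c xs = 0) \<and> (\<forall>xs. b xs = 0)
      | Suc m \<Rightarrow> bcochain G m b \<and> (\<forall>xs\<in>tuples G (Suc n). cobdry b xs = c xs))"

definition Hb_vanishes :: "('a, 'b) monoid_scheme \<Rightarrow> nat \<Rightarrow> bool" where
  "Hb_vanishes G n \<longleftrightarrow> (\<forall>c. bcocycle G n c \<longrightarrow> (\<exists>b. bprimitive G n b c))"

definition vanishing_const :: "('a, 'b) monoid_scheme \<Rightarrow> nat \<Rightarrow> real \<Rightarrow> bool" where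
  "vanishing_const G n K \<longleftrightarrow>
     (\<forall>c. bcocycle G n c \<longrightarrow>
        (\<exists>b. bprimitive G n b c \<and> supnorm G (n - 1) b \<le> K * supnorm G n c))"

definition vanishing_modulus :: "('a, 'b) monoid_scheme \<Rightarrow> nat \<Rightarrow> ereal" where
  "vanishing_modulus G n = Inf {ereal K | K. K \<ge> 0 \<and> vanishing_const G n K}"

end

(* Let c be a bounded n-cocycle on \<Gamma>. On each \<Gamma>_i it has a primitive of norm at most
   B = (K + 1)|c|, the slack being needed because the vanishing modulus is only an infimum. The functions
   bounded by B form a compact space in the product topology (Tychonoff). For a finite set E
   of group elements, "invariant under translation by E, with coboundary c on tuples from E"
   is a closed condition on such functions; finitely many of these conditions only involve a
   finite set, which lies in a single \<Gamma>_i, where the primitive (extended by zero) satisfies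
   them. By the finite intersection property some function satisfies all of them at once,
   and is then a bounded primitive of c on \<Gamma>. *)
theory Submission
  imports Defs "HOL-Analysis.Analysis"
begin

lemma bounded_solution_of_finite_solutions:
  fixes P :: "'e set \<Rightarrow> ('x \<Rightarrow> real) \<Rightarrow> bool" and A :: "'e set" and B :: real
  assumes closed: "\<And>E. closedin (powertop_real UNIV) {f. P E f}"
    and antimono: "\<And>E E' f. E \<subseteq> E' \<Longrightarrow> P E' f \<Longrightarrow> P E f"
    and finite_solution: "\<And>E. finite E \<Longrightarrow> E \<subseteq> A \<Longrightarrow> \<exists>f. (\<forall>x. \<bar>f x\<bar> \<le> B) \<and> P E f"
  shows "\<exists>f. (\<forall>x. \<bar>f x\<bar> \<le> B) \<and> (\<forall>E. finite E \<longrightarrow> E \<subseteq> A \<longrightarrow> P E f)"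
proof -
  let ?X = "powertop_real (UNIV :: 'x set)"
  define S :: "('x \<Rightarrow> real) set" where "S = (\<Pi>\<^sub>E x\<in>UNIV. {-B..B})"
  have interval: "\<bar>y\<bar> \<le> B \<longleftrightarrow> y \<in> {-B..B}" for y :: real
    by auto
  have S_eq: "S = {f. \<forall>x. \<bar>f x\<bar> \<le> B}"
    unfolding S_def PiE_UNIV_domain interval by (auto simp: Pi_iff)
  have "compactin ?X S"
    unfolding S_def compactin_PiE by auto
  define \<C> where "\<C> = (\<lambda>E. {f. P E f}) ` {E. finite E \<and> E \<subseteq> A}"
  have "\<forall>C\<in>\<C>. closedin ?X C"
    using closed by (auto simp: \<C>_def)
  moreover have "S \<inter> \<Inter>\<F> \<noteq> {}" if \<F>: "finite \<F>" "\<F> \<subseteq> \<C>" for \<F>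
  proof -
    obtain \<E> where \<E>: "\<E> \<subseteq> {E. finite E \<and> E \<subseteq> A}" "finite \<E>" "\<F> = (\<lambda>E. {f. P E f}) ` \<E>"
      using finite_subset_image[OF \<F>[unfolded \<C>_def]] by blast
    then obtain f where "\<forall>x. \<bar>f x\<bar> \<le> B" "P (\<Union>\<E>) f"
      using finite_solution[of "\<Union>\<E>"] by auto
    then have "f \<in> S \<inter> \<Inter>\<F>"
      using \<E> antimono[OF Union_upper] by (auto simp: S_eq)
    then show ?thesis
      by (metis empty_iff)
  qed
  ultimately have "S \<inter> \<Inter>\<C> \<noteq> {}"
    using \<open>compactin ?X S\<close> by (intro compactin_fip[THEN iffD1, THEN conjunct2, rule_format]) auto
  then show ?thesis
    by (auto simp: S_eq \<C>_def)
qed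

lemma closedin_solution_set:
  assumes "\<And>k. k \<in> K \<Longrightarrow> continuous_map X euclideanreal (L k)"
  shows "closedin X {x \<in> topspace X. \<forall>k\<in>K. L k x = r k}"
proof (cases "K = {}")
  case False
  have "{x \<in> topspace X. \<forall>k\<in>K. L k x = r k} = (\<Inter>k\<in>K. {x \<in> topspace X. L k x \<in> {r k}})"
    using False by auto
  then show ?thesis
    using False assms by (simp only:) (intro closedin_INT closedin_continuous_map_preimage, auto)
qed simp

lemma continuous_map_cobdry:
  "continuous_map (powertop_real UNIV) euclideanreal (\<lambda>f. cobdry f xs)"
  unfolding cobdry_def
  by (intro continuous_map_sum continuous_map_real_mult_left continuous_map_product_projection) auto

lemma finite_subset_directed_Union:
  assumes "finite E" "E \<subseteq> (\<Union>i\<in>I. H i)" "I \<noteq> {}"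
    and directed: "\<And>i j. i \<in> I \<Longrightarrow> j \<in> I \<Longrightarrow> \<exists>k\<in>I. H i \<subseteq> H k \<and> H j \<subseteq> H k"
  shows "\<exists>k\<in>I. E \<subseteq> H k"
  using assms(1,2)
proof (induction E rule: finite_induct)
  case empty
  then show ?case using \<open>I \<noteq> {}\<close> by auto
next
  case (insert x E)
  then obtain i where i: "i \<in> I" "E \<subseteq> H i" by auto
  obtain j where j: "j \<in> I" "x \<in> H j" using insert.prems by auto
  obtain k where "k \<in> I" "H i \<subseteq> H k" "H j \<subseteq> H k" using directed[OF i(1) j(1)] by blast
  then show ?case using i j by blast
qed

lemma tuples_restrict: "tuples (G\<lparr>carrier := H\<rparr>) k = {xs. length xs = k \<and> set xs \<subseteq> H}"
  by (simp add: tuples_def)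

lemma tuples_restrict_subset: "H \<subseteq> carrier G \<Longrightarrow> tuples (G\<lparr>carrier := H\<rparr>) k \<subseteq> tuples G k"
  by (auto simp: tuples_def)

lemma tuples_nonempty: "carrier G \<noteq> {} \<Longrightarrow> tuples G k \<noteq> {}"
proof -
  assume "carrier G \<noteq> {}"
  then obtain x where "x \<in> carrier G" by blast
  then have "replicate k x \<in> tuples G k" by (auto simp: tuples_def)
  then show ?thesis by blast
qed

lemma omit_in_tuples:
  assumes "xs \<in> tuples G (Suc k)" "j < Suc k"
  shows "take j xs @ drop (Suc j) xs \<in> tuples G k"
  using assms set_take_subset[of j xs] set_drop_subset[of "Suc j" xs] by (auto simp: tuples_def)

lemma bcochain_restrict:
  assumes "bcochain G n f" "H \<subseteq> carrier G"
  shows "bcochain (G\<lparr>carrier := H\<rparr>) n f"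
proof -
  have "tuples (G\<lparr>carrier := H\<rparr>) (Suc n) \<subseteq> tuples G (Suc n)"
    using tuples_restrict_subset[OF assms(2)] .
  then show ?thesis
    using assms unfolding bcochain_def by (simp add: subset_iff) blast
qed

lemma bcocycle_restrict:
  assumes "bcocycle G n c" "H \<subseteq> carrier G"
  shows "bcocycle (G\<lparr>carrier := H\<rparr>) n c"
  using assms bcochain_restrict tuples_restrict_subset[OF assms(2)] unfolding bcocycle_def by blast

lemma abs_le_supnorm:
  assumes "bcochain G n f" "xs \<in> tuples G (Suc n)"
  shows "\<bar>f xs\<bar> \<le> supnorm G n f"
proof -
  from assms(1) obtain B where "\<forall>xs\<in>tuples G (Suc n). \<bar>f xs\<bar> \<le> B"
    unfolding bcochain_def by blast
  then have "bdd_above ((\<lambda>xs. \<bar>f xs\<bar>) ` tuples G (Suc n))"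
    by (auto intro: bdd_aboveI2)
  then show ?thesis
    unfolding supnorm_def using assms(2) by (rule cSUP_upper2) simp
qed

lemma supnorm_nonneg:
  assumes "bcochain G n f" "carrier G \<noteq> {}"
  shows "0 \<le> supnorm G n f"
proof -
  obtain xs where "xs \<in> tuples G (Suc n)"
    using tuples_nonempty[OF assms(2)] by blast
  then show ?thesis
    using abs_le_supnorm[OF assms(1)] abs_ge_zero order_trans by blast
qed

lemma supnorm_restrict_le:
  assumes "bcochain G n f" "H \<subseteq> carrier G" "H \<noteq> {}"
  shows "supnorm (G\<lparr>carrier := H\<rparr>) n f \<le> supnorm G n f"
  unfolding supnorm_def
proof (rule cSUP_least)
  show "tuples (G\<lparr>carrier := H\<rparr>) (Suc n) \<noteq> {}"
    using tuples_nonempty[of "G\<lparr>carrier := H\<rparr>"] assms(3) by simp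
  show "\<bar>f xs\<bar> \<le> (SUP xs\<in>tuples G (Suc n). \<bar>f xs\<bar>)" if "xs \<in> tuples (G\<lparr>carrier := H\<rparr>) (Suc n)" for xs
    using abs_le_supnorm[OF assms(1)] that tuples_restrict_subset[OF assms(2)]
    unfolding supnorm_def by blast
qed

lemma vanishing_const_of_modulus_less:
  assumes "carrier G \<noteq> {}" "vanishing_modulus G n < ereal K"
  shows "vanishing_const G n K"
proof -
  obtain K' where K': "0 \<le> K'" "vanishing_const G n K'" "K' < K"
    using assms(2) unfolding vanishing_modulus_def Inf_less_iff by auto
  show ?thesis
    unfolding vanishing_const_def
  proof (intro allI impI)
    fix c assume c: "bcocycle G n c"
    then obtain b where b: "bprimitive G n b c" "supnorm G (n - 1) b \<le> K' * supnorm G n c"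
      using K'(2) unfolding vanishing_const_def by blast
    have "K' * supnorm G n c \<le> K * supnorm G n c"
      using K'(3) supnorm_nonneg[OF _ assms(1), of n c] c
      by (intro mult_right_mono) (auto simp: bcocycle_def)
    then show "\<exists>b. bprimitive G n b c \<and> supnorm G (n - 1) b \<le> K * supnorm G n c"
      using b by fastforce
  qed
qed

lemma vanishing_modulus_nonneg: "0 \<le> vanishing_modulus G n"
  unfolding vanishing_modulus_def by (auto intro: Inf_greatest)

lemma bounded_primitive_on_subgroup:
  assumes "subgroup H G" "bcocycle G (Suc m) c" "vanishing_modulus (G\<lparr>carrier := H\<rparr>) (Suc m) \<le> ereal K"
  shows "\<exists>b. bprimitive (G\<lparr>carrier := H\<rparr>) (Suc m) b c \<and>
           (\<forall>xs\<in>tuples (G\<lparr>carrier := H\<rparr>) (Suc m). \<bar>b xs\<bar> \<le> (K + 1) * supnorm G (Suc m) c)"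
proof -
  let ?H = "G\<lparr>carrier := H\<rparr>"
  have H: "H \<subseteq> carrier G" "H \<noteq> {}"
    using subgroup.subset[OF assms(1)] subgroup.one_closed[OF assms(1)] by auto
  have "vanishing_const ?H (Suc m) (K + 1)"
    using assms(3) H(2) by (intro vanishing_const_of_modulus_less) (auto intro: le_less_trans)
  moreover have c: "bcocycle ?H (Suc m) c"
    using bcocycle_restrict[OF assms(2) H(1)] .
  ultimately obtain b where b: "bprimitive ?H (Suc m) b c"
    "supnorm ?H m b \<le> (K + 1) * supnorm ?H (Suc m) c"
    unfolding vanishing_const_def by fastforce
  have "0 \<le> K"
    using order_trans[OF vanishing_modulus_nonneg assms(3)] by simp
  have "supnorm ?H m b \<le> (K + 1) * supnorm ?H (Suc m) c"
    by (fact b(2))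
  also have "\<dots> \<le> (K + 1) * supnorm G (Suc m) c"
    using \<open>0 \<le> K\<close> supnorm_restrict_le[OF _ H] assms(2)
    by (intro mult_left_mono) (auto simp: bcocycle_def)
  finally have "supnorm ?H m b \<le> (K + 1) * supnorm G (Suc m) c" .
  moreover have "bcochain ?H m b"
    using b(1) by (simp add: bprimitive_def)
  ultimately show ?thesis
    using b(1) abs_le_supnorm order_trans by blast
qed

definition cobounds_on :: "('a, 'b) monoid_scheme \<Rightarrow> nat \<Rightarrow> ('a list \<Rightarrow> real) \<Rightarrow> 'a set \<Rightarrow> ('a list \<Rightarrow> real) \<Rightarrow> bool" where
  "cobounds_on G m c E f \<longleftrightarrow>
     (\<forall>g\<in>E. \<forall>xs\<in>tuples (G\<lparr>carrier := E\<rparr>) (Suc m). f (map (\<lambda>x. g \<otimes>\<^bsub>G\<^esub> x) xs) = f xs) \<and>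
     (\<forall>xs\<in>tuples (G\<lparr>carrier := E\<rparr>) (Suc (Suc m)). cobdry f xs = c xs)"

lemma bprimitive_Suc_iff:
  "bprimitive G (Suc m) b c \<longleftrightarrow>
     (\<exists>B. \<forall>xs\<in>tuples G (Suc m). \<bar>b xs\<bar> \<le> B) \<and> cobounds_on G m c (carrier G) b"
  by (simp add: bprimitive_def bcochain_def cobounds_on_def)

lemma cobounds_on_antimono:
  "E \<subseteq> E' \<Longrightarrow> cobounds_on G m c E' f \<Longrightarrow> cobounds_on G m c E f"
  unfolding cobounds_on_def tuples_restrict by blast

lemma cobounds_on_iff_finite:
  "cobounds_on G m c E f \<longleftrightarrow> (\<forall>F. finite F \<longrightarrow> F \<subseteq> E \<longrightarrow> cobounds_on G m c F f)"
proof
  assume finite: "\<forall>F. finite F \<longrightarrow> F \<subseteq> E \<longrightarrow> cobounds_on G m c F f"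
  show "cobounds_on G m c E f"
    unfolding cobounds_on_def
  proof (intro conjI ballI)
    fix g xs assume g: "g \<in> E" and xs: "xs \<in> tuples (G\<lparr>carrier := E\<rparr>) (Suc m)"
    then have "cobounds_on G m c (insert g (set xs)) f"
      using finite by (simp add: tuples_restrict)
    then show "f (map (\<lambda>x. g \<otimes>\<^bsub>G\<^esub> x) xs) = f xs"
      using xs by (auto simp: cobounds_on_def tuples_restrict)
  next
    fix xs assume xs: "xs \<in> tuples (G\<lparr>carrier := E\<rparr>) (Suc (Suc m))"
    then have "cobounds_on G m c (set xs) f"
      using finite by (simp add: tuples_restrict)
    then show "cobdry f xs = c xs"
      using xs by (auto simp: cobounds_on_def tuples_restrict)
  qed
qed (use cobounds_on_antimono in blast)

lemma closedin_cobounds_on: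
  "closedin (powertop_real UNIV) {f. cobounds_on G m c E f}"
proof -
  let ?X = "powertop_real UNIV"
  let ?L = "\<lambda>(g, xs) f. f (map (\<lambda>x. g \<otimes>\<^bsub>G\<^esub> x) xs) - f xs"
  have "{f. cobounds_on G m c E f} =
        {f \<in> topspace ?X. \<forall>k\<in>E \<times> tuples (G\<lparr>carrier := E\<rparr>) (Suc m). ?L k f = 0} \<inter>
        {f \<in> topspace ?X. \<forall>xs\<in>tuples (G\<lparr>carrier := E\<rparr>) (Suc (Suc m)). cobdry f xs = c xs}"
    by (auto simp: cobounds_on_def)
  moreover have "continuous_map ?X euclideanreal (?L k)" for k
    by (cases k) (auto intro!: continuous_map_diff continuous_map_product_projection)
  ultimately show ?thesis
    by (simp only:) (intro closedin_Int closedin_solution_set continuous_map_cobdry)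
qed

lemma cobounds_on_zero_extension:
  assumes "subgroup H G" "bprimitive (G\<lparr>carrier := H\<rparr>) (Suc m) b c"
  shows "cobounds_on G m c H (\<lambda>xs. if xs \<in> tuples (G\<lparr>carrier := H\<rparr>) (Suc m) then b xs else 0)"
    (is "cobounds_on G m c H ?f")
proof -
  let ?H = "G\<lparr>carrier := H\<rparr>"
  have b: "cobounds_on ?H m c H b"
    using assms(2) by (simp add: bprimitive_Suc_iff)
  have "cobdry ?f xs = cobdry b xs" if "xs \<in> tuples ?H (Suc (Suc m))" for xs
    unfolding cobdry_def using that omit_in_tuples[OF that] by (intro sum.cong) (auto simp: tuples_def)
  moreover have "map (\<lambda>x. g \<otimes>\<^bsub>G\<^esub> x) xs \<in> tuples ?H (Suc m)"
    if "g \<in> H" "xs \<in> tuples ?H (Suc m)" for g xs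
    using that subgroup.m_closed[OF assms(1)] by (auto simp: tuples_def)
  ultimately show ?thesis
    using b by (simp add: cobounds_on_def)
qed

lemma bprimitive_of_bounded_local_primitives:
  assumes "I \<noteq> {}" "\<And>i. i \<in> I \<Longrightarrow> subgroup (H i) G"
    and directed: "\<And>i j. i \<in> I \<Longrightarrow> j \<in> I \<Longrightarrow> \<exists>k\<in>I. H i \<subseteq> H k \<and> H j \<subseteq> H k"
    and "(\<Union>i\<in>I. H i) = carrier G"
    and local_primitive: "\<And>i. i \<in> I \<Longrightarrow> \<exists>b. bprimitive (G\<lparr>carrier := H i\<rparr>) (Suc m) b c \<and>
                                   (\<forall>xs\<in>tuples (G\<lparr>carrier := H i\<rparr>) (Suc m). \<bar>b xs\<bar> \<le> B)"
  shows "\<exists>f. bprimitive G (Suc m) f c"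
proof -
  obtain i b where "i \<in> I" "\<forall>xs\<in>tuples (G\<lparr>carrier := H i\<rparr>) (Suc m). \<bar>b xs\<bar> \<le> B"
    using assms(1) local_primitive by blast
  moreover have "tuples (G\<lparr>carrier := H i\<rparr>) (Suc m) \<noteq> {}"
    using tuples_nonempty[of "G\<lparr>carrier := H i\<rparr>"] subgroup.one_closed[OF assms(2)[OF \<open>i \<in> I\<close>]] by auto
  ultimately have "0 \<le> B"
    by (meson abs_ge_zero all_not_in_conv order_trans)
  have finite_solution: "\<exists>f. (\<forall>xs. \<bar>f xs\<bar> \<le> B) \<and> cobounds_on G m c E f" if E: "finite E" "E \<subseteq> carrier G" for E
  proof -
    obtain i where i: "i \<in> I" "E \<subseteq> H i"
      using finite_subset_directed_Union[OF E(1) _ assms(1) directed] E(2) assms(4) by auto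
    then obtain b where b: "bprimitive (G\<lparr>carrier := H i\<rparr>) (Suc m) b c"
      "\<forall>xs\<in>tuples (G\<lparr>carrier := H i\<rparr>) (Suc m). \<bar>b xs\<bar> \<le> B"
      using local_primitive by blast
    let ?f = "\<lambda>xs. if xs \<in> tuples (G\<lparr>carrier := H i\<rparr>) (Suc m) then b xs else 0"
    show ?thesis
    proof (intro exI conjI)
      show "\<forall>xs. \<bar>?f xs\<bar> \<le> B"
        using b(2) \<open>0 \<le> B\<close> by simp
      show "cobounds_on G m c E ?f"
        using cobounds_on_zero_extension[OF assms(2)[OF i(1)] b(1)] cobounds_on_antimono i(2) by blast
    qed
  qed
  have "\<exists>f. (\<forall>xs. \<bar>f xs\<bar> \<le> B) \<and> (\<forall>E. finite E \<longrightarrow> E \<subseteq> carrier G \<longrightarrow> cobounds_on G m c E f)"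
  proof (rule bounded_solution_of_finite_solutions)
    show "closedin (powertop_real UNIV) {f. cobounds_on G m c E f}" for E
      by (rule closedin_cobounds_on)
    show "cobounds_on G m c E f" if "E \<subseteq> E'" "cobounds_on G m c E' f" for E E' f
      using that by (rule cobounds_on_antimono)
  qed (rule finite_solution)
  then obtain f where f: "\<forall>xs. \<bar>f xs\<bar> \<le> B" "\<forall>E. finite E \<longrightarrow> E \<subseteq> carrier G \<longrightarrow> cobounds_on G m c E f"
    by blast
  moreover have "cobounds_on G m c (carrier G) f"
    using f(2) by (subst cobounds_on_iff_finite) blast
  ultimately have "bprimitive G (Suc m) f c"
    by (auto simp: bprimitive_Suc_iff)
  then show ?thesis
    by (rule exI[of _ f])
qed

lemma Hb_vanishes_0_of_cover:
  assumes "\<And>x. x \<in> carrier G \<Longrightarrow> \<exists>i\<in>I. x \<in> H i" "\<And>i. i \<in> I \<Longrightarrow> H i \<subseteq> carrier G"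
    and "\<And>i. i \<in> I \<Longrightarrow> Hb_vanishes (G\<lparr>carrier := H i\<rparr>) 0"
  shows "Hb_vanishes G 0"
  unfolding Hb_vanishes_def
proof (intro allI impI)
  fix c assume c: "bcocycle G 0 c"
  have "c [x] = 0" if x: "x \<in> carrier G" for x
  proof -
    obtain i where i: "i \<in> I" "x \<in> H i"
      using assms(1) x by blast
    then obtain b where "bprimitive (G\<lparr>carrier := H i\<rparr>) 0 b c"
      using assms(3) bcocycle_restrict[OF c assms(2)] unfolding Hb_vanishes_def by blast
    then show ?thesis
      using i(2) by (simp add: bprimitive_def tuples_def)
  qed
  then have "bprimitive G 0 (\<lambda>_. 0) c"
    by (auto simp: bprimitive_def tuples_def length_Suc_conv)
  then show "\<exists>b. bprimitive G 0 b c" by blast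
qed

theorem proposition4p13:
  fixes G :: "('a, 'b) monoid_scheme" and H :: "'i \<Rightarrow> 'a set" and I :: "'i set"
    and n :: nat and K :: real
  assumes "group G"
    and "I \<noteq> {}"
    and "\<And>i. i \<in> I \<Longrightarrow> subgroup (H i) G"
    and "\<And>i j. i \<in> I \<Longrightarrow> j \<in> I \<Longrightarrow> \<exists>k\<in>I. H i \<subseteq> H k \<and> H j \<subseteq> H k"
    and "(\<Union>i\<in>I. H i) = carrier G"
    and "\<And>i. i \<in> I \<Longrightarrow> Hb_vanishes (G\<lparr>carrier := H i\<rparr>) n"
    and "\<And>i. i \<in> I \<Longrightarrow> vanishing_modulus (G\<lparr>carrier := H i\<rparr>) n \<le> ereal K"
  shows "Hb_vanishes G n"
proof (cases n)
  case 0
  show ?thesis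
    unfolding 0 by (rule Hb_vanishes_0_of_cover[of G I H]) (use assms(3,5,6) 0 subgroup.subset in auto)
next
  case (Suc m)
  have "\<exists>b. bprimitive G (Suc m) b c" if "bcocycle G (Suc m) c" for c
    using assms(2-5) bounded_primitive_on_subgroup[OF assms(3) that assms(7)[unfolded Suc]]
    by (intro bprimitive_of_bounded_local_primitives)
  then show ?thesis
    unfolding Suc Hb_vanishes_def by blast
qed

end
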